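(* Let $t_0\ge0$ and $h>0$, and let $$P(t_0,h)=\int_{-\infty}^{\infty}\left|\Gamma\left(\frac{3+it}2\right)\right|\exp\left(\frac{\pi t}4\right)\exp\left(-\frac{(t-t_0)^2}{2h^2}\right)dt.$$ Then $$P(t_0,h)\le h\pi\left(t_0+\frac h{\sqrt{2\pi}}+1+\frac1{2\sqrt2}\right).$$
   Context: $\Gamma$ is Euler's Gamma function. *)

theory Defs
  imports "HOL-Analysis.Analysis"
begin

definition P :: "real \<Rightarrow> real \<Rightarrow> real" where
  "P t0 h = integral UNIV (\<lambda>t::real.
     norm (Gamma (Complex (3/2) (t/2))) * exp (pi * t / 4) * exp (- ((t - t0)^2) / (2 * h^2)))"

end

theory Submission
  imports Defs "HOL-Probability.Probability"
begin

text \<open>The reflection formula gives the exact modulus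
  \<open>|\<Gamma>(3/2 + iy)|\<^sup>2 = (1/4 + y\<^sup>2) \<pi> / cosh (\<pi> y)\<close>, whence
  \<open>|\<Gamma>((3 + it)/2)| exp (\<pi>t/4) \<le> \<surd>(\<pi>/2) (max t 0 + 1)\<close>.
  Writing \<open>max t 0 \<le> t\<^sub>0 + max (t - t\<^sub>0) 0\<close>, the integral is then bounded by the mass
  \<open>\<surd>(2\<pi>) h\<close> of the Gaussian and its positive half-moment \<open>h\<^sup>2\<close>, giving even the
  sharper bound \<open>h\<pi>(t\<^sub>0 + h/\<surd>(2\<pi>) + 1)\<close>.\<close>

lemma Re_pos_notin_nonpos_Ints: "0 < Re z \<Longrightarrow> z \<notin> \<int>\<^sub>\<le>\<^sub>0"
  using nonpos_Ints_subset_nonpos_Reals by (auto simp: complex_nonpos_Reals_iff)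

lemma norm_Gamma_half_line_sq: "(norm (Gamma (Complex (1/2) y)))\<^sup>2 = pi / cosh (pi * y)"
proof -
  define z where "z = Complex (1/2) y"
  have "cnj z = 1 - z"
    by (simp add: z_def complex_eq_iff)
  have sin_z: "sin (of_real pi * z) = of_real (cosh (pi * y))"
    by (simp add: z_def complex_eq_iff Re_sin Im_sin cosh_def)
  have "of_real ((norm (Gamma z))\<^sup>2) = Gamma z * cnj (Gamma z)"
    by (metis complex_norm_square of_real_power)
  also have "\<dots> = of_real pi / sin (of_real pi * z)"
    by (simp add: cnj_Gamma \<open>cnj z = 1 - z\<close> Gamma_reflection_complex)
  also have "\<dots> = of_real (pi / cosh (pi * y))"
    by (simp add: sin_z)
  finally show ?thesis
    unfolding z_def of_real_eq_iff .
qed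

lemma norm_Gamma_three_halves_line_sq:
  "(norm (Gamma (Complex (3/2) y)))\<^sup>2 = (1/4 + y\<^sup>2) * (pi / cosh (pi * y))"
proof -
  define z where "z = Complex (1/2) y"
  have "Complex (3/2) y = z + 1"
    by (simp add: z_def complex_eq_iff)
  then have "Gamma (Complex (3/2) y) = z * Gamma z"
    using Gamma_plus1 Re_pos_notin_nonpos_Ints[of z] by (simp add: z_def)
  moreover have "(norm z)\<^sup>2 = 1/4 + y\<^sup>2"
    by (simp add: z_def cmod_power2 power_divide)
  ultimately show ?thesis
    by (simp add: norm_mult power_mult_distrib norm_Gamma_half_line_sq z_def)
qed

lemma one_plus_sq_mult_exp_le_cosh:
  fixes t :: real
  shows "(1 + t\<^sup>2) * exp (pi * t / 2) \<le> 2 * (max t 0 + 1)\<^sup>2 * cosh (pi * t / 2)"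
proof -
  define a where "a = pi * t / 2"
  have two_cosh: "2 * cosh a = exp a + exp (-a)"
    by (simp add: cosh_def)
  show ?thesis
  proof (cases "t \<ge> 0")
    case True
    have "1 + t\<^sup>2 \<le> (max t 0 + 1)\<^sup>2"
      using True by (simp add: power2_eq_square algebra_simps)
    moreover have "exp a \<le> 2 * cosh a"
      by (simp add: two_cosh)
    ultimately have "(1 + t\<^sup>2) * exp a \<le> (max t 0 + 1)\<^sup>2 * (2 * cosh a)"
      by (intro mult_mono) auto
    then show ?thesis
      by (simp add: a_def[symmetric] ac_simps)
  next
    case False
    \<comment> \<open>for \<open>t < 0\<close> the decay of \<open>exp a\<close> beats \<open>t\<^sup>2\<close>: \<open>-t \<le> -a \<le> exp (-a)\<close>\<close>
    have "-t \<le> -a"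
      using False pi_gt3 by (simp add: a_def)
    also have "\<dots> \<le> exp (-a)"
      using exp_ge_add_one_self[of "-a"] by linarith
    finally have "t\<^sup>2 \<le> (exp (-a))\<^sup>2"
      using False by (metis abs_le_square_iff abs_of_neg abs_exp_cancel not_le)
    then have "t\<^sup>2 * exp a \<le> (exp (-a))\<^sup>2 * exp a"
      by (simp add: mult_right_mono)
    also have "\<dots> = exp (-a)"
      by (simp add: power2_eq_square exp_minus field_simps)
    finally have "t\<^sup>2 * exp a \<le> exp (-a)" .
    then show ?thesis
      using False two_cosh by (simp add: a_def[symmetric] max_def distrib_right)
  qed
qed

lemma norm_Gamma_three_halves_exp_le:
  "norm (Gamma (Complex (3/2) (t/2))) * exp (pi * t / 4) \<le> sqrt (pi/2) * (max t 0 + 1)"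
proof (rule power2_le_imp_le)
  have cosh_pos: "cosh (pi * t / 2) > 0"
    by (rule cosh_real_pos)
  have "(exp (pi * t / 4))\<^sup>2 = exp (pi * t / 2)"
    by (simp flip: exp_double)
  then have "(norm (Gamma (Complex (3/2) (t/2))) * exp (pi * t / 4))\<^sup>2
        = pi / 4 * ((1 + t\<^sup>2) * exp (pi * t / 2) / cosh (pi * t / 2))"
    by (simp add: power_mult_distrib norm_Gamma_three_halves_line_sq power_divide field_simps)
  also have "\<dots> \<le> pi / 4 * (2 * (max t 0 + 1)\<^sup>2)"
    using one_plus_sq_mult_exp_le_cosh[of t] cosh_pos by (simp add: divide_le_eq)
  also have "\<dots> = (sqrt (pi/2) * (max t 0 + 1))\<^sup>2"
    by (simp add: power_mult_distrib)
  finally show "(norm (Gamma (Complex (3/2) (t/2))) * exp (pi * t / 4))\<^sup>2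
      \<le> (sqrt (pi/2) * (max t 0 + 1))\<^sup>2" .
qed simp

lemma gaussian_has_integral:
  fixes \<mu> \<sigma> :: real
  assumes "\<sigma> > 0"
  shows "has_bochner_integral lborel (\<lambda>t. exp (- ((t - \<mu>)\<^sup>2) / (2 * \<sigma>\<^sup>2))) (sqrt (2 * pi) * \<sigma>)"
proof -
  have "has_bochner_integral lborel (\<lambda>t. sqrt (2 * pi) * \<sigma> * normal_density \<mu> \<sigma> t) (sqrt (2 * pi) * \<sigma> * 1)"
    using normal_moment_even[OF assms, where k=0 and \<mu>=\<mu>] by (intro has_bochner_integral_mult_right) simp
  then show ?thesis
    using assms by (simp add: normal_density_def real_sqrt_mult)
qed

lemma gaussian_positive_part_has_integral:
  fixes \<mu> \<sigma> :: real
  assumes "\<sigma> > 0"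
  shows "has_bochner_integral lborel
           (\<lambda>t. exp (- ((t - \<mu>)\<^sup>2) / (2 * \<sigma>\<^sup>2)) * max (t - \<mu>) 0) (\<sigma>\<^sup>2)"
proof -
  define c where "c = sqrt (2 * pi) * \<sigma> / 2"
  have "has_bochner_integral lborel
      (\<lambda>t. c * (normal_density \<mu> \<sigma> t * \<bar>t - \<mu>\<bar> ^ (2 * 0 + 1)) + c * (normal_density \<mu> \<sigma> t * (t - \<mu>) ^ (2 * 0 + 1)))
      (c * (2 ^ 0 * \<sigma> ^ (2 * 0 + 1) * fact 0 * sqrt (2 / pi)) + c * 0)"
    using normal_moment_abs_odd[OF assms, where k=0 and \<mu>=\<mu>] normal_moment_odd[OF assms, where k=0 and \<mu>=\<mu>]
    by (intro has_bochner_integral_add has_bochner_integral_mult_right)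
  moreover have "c * (2 ^ 0 * \<sigma> ^ (2 * 0 + 1) * fact 0 * sqrt (2 / pi)) + c * 0 = \<sigma>\<^sup>2"
    by (simp add: c_def power2_eq_square real_sqrt_divide real_sqrt_mult)
  moreover have "c * (normal_density \<mu> \<sigma> t * \<bar>t - \<mu>\<bar> ^ (2 * 0 + 1)) + c * (normal_density \<mu> \<sigma> t * (t - \<mu>) ^ (2 * 0 + 1))
      = exp (- ((t - \<mu>)\<^sup>2) / (2 * \<sigma>\<^sup>2)) * max (t - \<mu>) 0" for t
    using assms by (simp add: c_def normal_density_def real_sqrt_mult max_def field_simps)
  ultimately show ?thesis
    by simp
qed

lemma integral_le_if_dominated:
  fixes f g :: "real \<Rightarrow> real"
  assumes "f \<in> borel_measurable lborel" and "\<And>t. 0 \<le> f t" and "\<And>t. f t \<le> g t"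
    and "has_bochner_integral lborel g I"
  shows "integral UNIV f \<le> I"
proof -
  have "integrable lborel g"
    using assms(4) by (rule integrable.intros)
  then have "integrable lborel f"
    by (rule Bochner_Integration.integrable_bound) (use assms in \<open>auto intro!: AE_I2 order_trans[OF _ abs_ge_self]\<close>)
  then have "integral UNIV f = (\<integral>t. f t \<partial>lborel)"
    by (rule integral_lborel)
  also have "\<dots> \<le> (\<integral>t. g t \<partial>lborel)"
    by (rule integral_mono) (use \<open>integrable lborel f\<close> \<open>integrable lborel g\<close> assms in auto)
  also have "\<dots> = I"
    using assms(4) by (rule has_bochner_integral_integral_eq)
  finally show ?thesis .
qed

lemma continuous_on_Gamma_three_halves_line: "continuous_on UNIV (\<lambda>t. Gamma (Complex (3/2) (t/2)))"
proof -
  have "continuous_on UNIV (\<lambda>t::real. Complex (3/2) (t/2))"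
    unfolding Complex_eq by (intro continuous_intros) auto
  moreover have "continuous_on (range (\<lambda>t::real. Complex (3/2) (t/2))) Gamma"
    by (intro continuous_on_Gamma) (use Re_pos_notin_nonpos_Ints in force)
  ultimately show ?thesis
    by (rule continuous_on_compose[unfolded comp_def])
qed

theorem lemma6p5:
  fixes t0 h :: real
  assumes "t0 \<ge> 0" and "h > 0"
  shows "P t0 h \<le> h * pi * (t0 + h / sqrt (2 * pi) + 1 + 1 / (2 * sqrt 2))"
proof -
  define G where "G t = exp (- ((t - t0)^2) / (2 * h^2))" for t
  define g where "g t = sqrt (pi/2) * ((t0 + 1) * G t + G t * max (t - t0) 0)" for t
  have g_integral: "has_bochner_integral lborel g (sqrt (pi/2) * ((t0 + 1) * (sqrt (2 * pi) * h) + h\<^sup>2))"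
    unfolding g_def G_def
    using gaussian_has_integral[OF \<open>h > 0\<close>] gaussian_positive_part_has_integral[OF \<open>h > 0\<close>]
    by (intro has_bochner_integral_mult_right has_bochner_integral_add)
  have dominated: "norm (Gamma (Complex (3/2) (t/2))) * exp (pi * t / 4) * G t \<le> g t" for t
  proof -
    have "norm (Gamma (Complex (3/2) (t/2))) * exp (pi * t / 4) * G t \<le> sqrt (pi/2) * (max t 0 + 1) * G t"
      by (intro mult_right_mono norm_Gamma_three_halves_exp_le) (simp add: G_def)
    also have "\<dots> \<le> g t"
      using \<open>t0 \<ge> 0\<close> by (auto simp: g_def G_def max_def algebra_simps intro!: mult_right_mono)
    finally show ?thesis .
  qed
  have "continuous_on UNIV (\<lambda>t. norm (Gamma (Complex (3/2) (t/2))) * exp (pi * t / 4) * G t)"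
    unfolding G_def
    by (intro continuous_intros continuous_on_Gamma_three_halves_line) (use \<open>h > 0\<close> in auto)
  then have "(\<lambda>t. norm (Gamma (Complex (3/2) (t/2))) * exp (pi * t / 4) * G t) \<in> borel_measurable lborel"
    by (simp add: borel_measurable_continuous_onI)
  then have "P t0 h \<le> sqrt (pi/2) * ((t0 + 1) * (sqrt (2 * pi) * h) + h\<^sup>2)"
    unfolding P_def G_def[symmetric]
    by (rule integral_le_if_dominated[OF _ _ dominated g_integral]) (simp add: G_def)
  also have "\<dots> = h * pi * (t0 + h / sqrt (2 * pi) + 1)"
  proof -
    have "sqrt (pi/2) * sqrt (2 * pi) = pi"
      by (simp add: real_sqrt_mult[symmetric])
    then have "sqrt (pi/2) = pi / sqrt (2 * pi)"
      by (simp add: eq_divide_eq)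
    then show ?thesis
      by (simp add: power2_eq_square field_simps)
  qed
  also have "\<dots> \<le> h * pi * (t0 + h / sqrt (2 * pi) + 1 + 1 / (2 * sqrt 2))"
    using \<open>h > 0\<close> by simp
  finally show ?thesis .
qed

end
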